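(* Let $\Psi$ be a finite set of contexts and $\psi_t$ a target context, and assume $D(x\mid\psi)>0$ for every $\psi\in\Psi$ and every $x\models\psi$. Then there exist finite constants $\beta_\psi\ge0$ ($\psi\in\Psi$), depending only on $\Psi$, $\psi_t$ and $D$, such that for every $h\in\mathcal{H}$ for which $\Psi$ is representative for $\psi_t$, $$L_{D,\psi_t}(h)\le\sum_{\psi\in\Psi}\beta_\psi\,L_{D,\psi}(h).$$
   Context: Let $X_1,\dots,X_n$ be Boolean variables and $\Phi=\{\phi_1,\dots,\phi_m\}$ candidate formulas; $\phi(c)=\bigwedge_{j:c_j=1}\phi_j$ for $c\in\{0,1\}^m$, $f_w(x)=\sum_jw_j\mathbb{1}[x\models\phi_j]$ for $w\in[-1,1]^m$. A context is a Boolean formula over the variables. The MAX-SAT classifier $h_{c,w}(x,\psi)=1$ iff $x\models\phi(c)\wedge\psi$ and $f_w(x)\ge f_w(x')$ for all $x'\models\phi(c)\wedge\psi$, else $0$; $\mathcal{H}$ is the set of these. A ground-truth $h^*\in\mathcal{H}$ labels the data (noiseless). For each context $\psi$, $D(x\mid\psi)$ is a distribution over assignments satisfying $\psi$, and $L_{D,\psi}(h)=\sum_{x}\mathbb{1}[h(x,\psi)\neq h^*(x,\psi)]D(x\mid\psi)$. Representativeness: for $h\in\mathcal{H}$, let $\chi(\psi,x,\psi')$ hold iff $x\models\psi\wedge\psi'$ and ($h(x,\psi)\neq h^*(x,\psi)\Rightarrow h(x,\psi')\neq h^*(x,\psi')$); let $\#(\psi,x)=|\{\psi'\in\Psi:\chi(\psi,x,\psi')\}|$.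 $\Psi$ is representative for $\psi_t$ (w.r.t. $h^*$ and $h$) iff $\#(\psi_t,x)>0$ for all assignments $x$. *)

theory Defs
  imports Complex_Main
begin

datatype 'v form = TT | FF | Atom 'v | Neg "'v form" | Conj "'v form" "'v form" | Disj "'v form" "'v form"

fun models :: "('v \<Rightarrow> bool) \<Rightarrow> 'v form \<Rightarrow> bool" where
  "models x TT = True"
| "models x FF = False"
| "models x (Atom v) = x v"
| "models x (Neg p) = (\<not> models x p)"
| "models x (Conj p q) = (models x p \<and> models x q)"
| "models x (Disj p q) = (models x p \<or> models x q)"

text \<open>Candidate formulas phi_0..phi_(m-1); x satisfies phi(c) = conjunction of phi_j with c_j = 1.\<close>
definition models_conj :: "(nat \<Rightarrow> 'v form) \<Rightarrow> nat \<Rightarrow> (nat \<Rightarrow> bool) \<Rightarrow> ('v \<Rightarrow> bool) \<Rightarrow> bool" where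
  "models_conj phi m c x = (\<forall>j<m. c j \<longrightarrow> models x (phi j))"

definition fw :: "(nat \<Rightarrow> 'v form) \<Rightarrow> nat \<Rightarrow> (nat \<Rightarrow> real) \<Rightarrow> ('v \<Rightarrow> bool) \<Rightarrow> real" where
  "fw phi m w x = (\<Sum>j<m. w j * (if models x (phi j) then 1 else 0))"

definition maxsat_cls :: "(nat \<Rightarrow> 'v form) \<Rightarrow> nat \<Rightarrow> (nat \<Rightarrow> bool) \<Rightarrow> (nat \<Rightarrow> real)
    \<Rightarrow> ('v \<Rightarrow> bool) \<Rightarrow> 'v form \<Rightarrow> bool" where
  "maxsat_cls phi m c w x psi =
     (models_conj phi m c x \<and> models x psi \<and>
      (\<forall>x'. models_conj phi m c x' \<and> models x' psi \<longrightarrow> fw phi m w x \<ge> fw phi m w x'))"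

text \<open>The hypothesis class H (c in {0,1}^m, w in [-1,1]^m; only indices < m matter).\<close>
definition hyp_class :: "(nat \<Rightarrow> 'v form) \<Rightarrow> nat \<Rightarrow> (('v \<Rightarrow> bool) \<Rightarrow> 'v form \<Rightarrow> bool) set" where
  "hyp_class phi m = {maxsat_cls phi m c w | c w. \<forall>j<m. \<bar>w j\<bar> \<le> 1}"

definition loss :: "('v form \<Rightarrow> ('v::finite \<Rightarrow> bool) \<Rightarrow> real) \<Rightarrow> (('v \<Rightarrow> bool) \<Rightarrow> 'v form \<Rightarrow> bool)
    \<Rightarrow> 'v form \<Rightarrow> (('v \<Rightarrow> bool) \<Rightarrow> 'v form \<Rightarrow> bool) \<Rightarrow> real" where
  "loss D hs psi h = (\<Sum>x\<in>UNIV. (if h x psi \<noteq> hs x psi then 1 else 0) * D psi x)"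

definition chi :: "(('v \<Rightarrow> bool) \<Rightarrow> 'v form \<Rightarrow> bool) \<Rightarrow> (('v \<Rightarrow> bool) \<Rightarrow> 'v form \<Rightarrow> bool)
    \<Rightarrow> 'v form \<Rightarrow> ('v \<Rightarrow> bool) \<Rightarrow> 'v form \<Rightarrow> bool" where
  "chi hs h psi x psi' = (models x psi \<and> models x psi' \<and>
      (h x psi \<noteq> hs x psi \<longrightarrow> h x psi' \<noteq> hs x psi'))"

definition count_rep :: "(('v \<Rightarrow> bool) \<Rightarrow> 'v form \<Rightarrow> bool) \<Rightarrow> (('v \<Rightarrow> bool) \<Rightarrow> 'v form \<Rightarrow> bool)
    \<Rightarrow> 'v form set \<Rightarrow> 'v form \<Rightarrow> ('v \<Rightarrow> bool) \<Rightarrow> nat" where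
  "count_rep hs h Psi psi x = card {psi' \<in> Psi. chi hs h psi x psi'}"

definition representative :: "(('v \<Rightarrow> bool) \<Rightarrow> 'v form \<Rightarrow> bool) \<Rightarrow> (('v \<Rightarrow> bool) \<Rightarrow> 'v form \<Rightarrow> bool)
    \<Rightarrow> 'v form set \<Rightarrow> 'v form \<Rightarrow> bool" where
  "representative hs h Psi psit = (\<forall>x. models x psit \<longrightarrow> count_rep hs h Psi psit x > 0)"

definition is_cond_dist :: "('v form \<Rightarrow> ('v::finite \<Rightarrow> bool) \<Rightarrow> real) \<Rightarrow> 'v form \<Rightarrow> bool" where
  "is_cond_dist D psi = ((\<forall>x. D psi x \<ge> 0) \<and> (\<forall>x. \<not> models x psi \<longrightarrow> D psi x = 0)
      \<and> (\<Sum>x\<in>UNIV. D psi x) = 1)"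

end

theory Submission
  imports Defs
begin

text \<open>Weight each source context by \<open>\<beta>\<^sub>\<psi> = \<Sum>\<^sub>x\<^sub>\<Turnstile>\<^sub>\<psi> 1 / D(x|\<psi>)\<close>, so that \<open>\<beta>\<^sub>\<psi> D(x|\<psi>) \<ge> 1\<close> on every
  assignment of \<open>\<psi>\<close>. An assignment on which \<open>h\<close> errs in the target context carries mass at most 1
  there, and by representativeness \<open>h\<close> also errs on it in some \<open>\<psi> \<in> \<Psi>\<close>, where it contributes at
  least 1 to \<open>\<beta>\<^sub>\<psi> L\<^sub>D\<^sub>,\<^sub>\<psi>(h)\<close>. Summing this pointwise bound over all assignments gives the claim.\<close>

definition inverse_mass :: "('v form \<Rightarrow> ('v::finite \<Rightarrow> bool) \<Rightarrow> real) \<Rightarrow> 'v form \<Rightarrow> real" where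
  "inverse_mass D psi = (\<Sum>x | models x psi. 1 / D psi x)"

lemma is_cond_dist_le_one:
  assumes "is_cond_dist D psi"
  shows "D psi x \<le> 1"
proof -
  have "D psi x \<le> (\<Sum>y\<in>UNIV. D psi y)"
    by (rule member_le_sum) (use assms in \<open>auto simp: is_cond_dist_def\<close>)
  with assms show ?thesis
    by (simp add: is_cond_dist_def)
qed

lemma inverse_mass_nonneg:
  assumes "\<forall>x. D psi x \<ge> 0"
  shows "inverse_mass D psi \<ge> 0"
  unfolding inverse_mass_def using assms by (simp add: sum_nonneg)

lemma inverse_mass_mult_ge_one:
  assumes "\<forall>y. D psi y \<ge> 0" and "models x psi" and "D psi x > 0"
  shows "inverse_mass D psi * D psi x \<ge> 1"
proof -
  have "1 / D psi x \<le> inverse_mass D psi"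
    unfolding inverse_mass_def by (rule member_le_sum) (use assms in auto)
  then have "1 / D psi x * D psi x \<le> inverse_mass D psi * D psi x"
    using assms(3) by (intro mult_right_mono) auto
  with assms(3) show ?thesis
    by simp
qed

lemma representative_errorE:
  assumes "representative hs h Psi psit" and "models x psit" and "h x psit \<noteq> hs x psit"
  obtains psi where "psi \<in> Psi" "models x psi" "h x psi \<noteq> hs x psi"
proof -
  have "count_rep hs h Psi psit x > 0"
    using assms(1,2) by (simp add: representative_def)
  then obtain psi where "psi \<in> Psi" "chi hs h psit x psi"
    unfolding count_rep_def by (metis (no_types, lifting) card.empty empty_Collect_eq less_irrefl)
  with assms(3) show thesis
    using that by (simp add: chi_def)
qed

lemma loss_le_inverse_mass_weighted_loss:
  assumes "finite Psi" and "is_cond_dist D psit"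
    and nonneg: "\<forall>psi\<in>Psi. \<forall>x. D psi x \<ge> 0"
    and pos: "\<forall>psi\<in>Psi. \<forall>x. models x psi \<longrightarrow> D psi x > 0"
    and rep: "representative hs h Psi psit"
  shows "loss D hs psit h \<le> (\<Sum>psi\<in>Psi. inverse_mass D psi * loss D hs psi h)"
proof -
  define e where "e psi x = (if h x psi \<noteq> hs x psi then 1 else 0 :: real)" for psi x
  define t where "t psi x = inverse_mass D psi * (e psi x * D psi x)" for psi x
  have t_nonneg: "t psi x \<ge> 0" if "psi \<in> Psi" for psi x
    using that nonneg inverse_mass_nonneg[of D psi] unfolding t_def e_def by simp
  have pointwise: "e psit x * D psit x \<le> (\<Sum>psi\<in>Psi. t psi x)" for x
  proof (cases "models x psit \<and> h x psit \<noteq> hs x psit")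
    case False
    with assms(2) have "e psit x * D psit x = 0"
      by (auto simp: e_def is_cond_dist_def)
    moreover have "(\<Sum>psi\<in>Psi. t psi x) \<ge> 0"
      using t_nonneg by (simp add: sum_nonneg)
    ultimately show ?thesis
      by linarith
  next
    case True
    then obtain psi where psi: "psi \<in> Psi" "models x psi" "h x psi \<noteq> hs x psi"
      using rep representative_errorE by blast
    have "e psit x * D psit x \<le> 1"
      using is_cond_dist_le_one[OF assms(2)] by (simp add: e_def)
    also have "\<dots> \<le> t psi x"
      using inverse_mass_mult_ge_one[of D psi x] psi nonneg pos by (simp add: t_def e_def)
    also have "\<dots> \<le> (\<Sum>psi\<in>Psi. t psi x)"
      by (rule member_le_sum) (use psi t_nonneg assms(1) in auto)
    finally show ?thesis .
  qed
  have "loss D hs psit h = (\<Sum>x\<in>UNIV. e psit x * D psit x)"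
    by (simp add: loss_def e_def)
  also have "\<dots> \<le> (\<Sum>x\<in>UNIV. \<Sum>psi\<in>Psi. t psi x)"
    by (rule sum_mono) (rule pointwise)
  also have "\<dots> = (\<Sum>psi\<in>Psi. \<Sum>x\<in>UNIV. t psi x)"
    by (rule sum.swap)
  also have "\<dots> = (\<Sum>psi\<in>Psi. inverse_mass D psi * loss D hs psi h)"
    by (simp add: t_def e_def loss_def sum_distrib_left)
  finally show ?thesis .
qed

theorem lemma1:
  fixes Psi :: "('v::finite) form set" and psit :: "'v form"
    and D :: "'v form \<Rightarrow> ('v \<Rightarrow> bool) \<Rightarrow> real"
  assumes "finite Psi"
    and "\<forall>psi \<in> Psi \<union> {psit}. is_cond_dist D psi"
    and "\<forall>psi \<in> Psi. \<forall>x. models x psi \<longrightarrow> D psi x > 0"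
  shows "\<exists>beta :: 'v form \<Rightarrow> real. (\<forall>psi\<in>Psi. beta psi \<ge> 0) \<and>
           (\<forall>(phi :: nat \<Rightarrow> 'v form) m hs h.
              hs \<in> hyp_class phi m \<longrightarrow> h \<in> hyp_class phi m \<longrightarrow>
              representative hs h Psi psit \<longrightarrow>
              loss D hs psit h \<le> (\<Sum>psi\<in>Psi. beta psi * loss D hs psi h))"
proof -
  have nonneg: "\<forall>psi\<in>Psi. \<forall>x. D psi x \<ge> 0"
    using assms(2) by (simp add: is_cond_dist_def)
  show ?thesis
  proof (intro exI[of _ "inverse_mass D"] conjI ballI allI impI)
    show "inverse_mass D psi \<ge> 0" if "psi \<in> Psi" for psi
      using inverse_mass_nonneg nonneg that by blast
    show "loss D hs psit h \<le> (\<Sum>psi\<in>Psi. inverse_mass D psi * loss D hs psi h)"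
      if "representative hs h Psi psit" for hs h
      using loss_le_inverse_mass_weighted_loss[OF assms(1) _ nonneg assms(3) that] assms(2)
      by simp
  qed
qed

end
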